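(* Let $X=(X_1,\dots,X_d)$ be a random vector with values in $\{0,1\}^d$ such that $\mathbb{P}(X=x)>0$ for every $x\in\{0,1\}^d$, and let $G:\{0,1\}^d\to\mathbb{R}$. For $A\subseteq D:=\{1,\dots,d\}$ let $e_A(X_A):=\dfrac{(-1)^{\sum_{j\in A}X_j}}{\mathbf{P}_A(X_A)}$ (with $e_\emptyset(X_\emptyset)=1$). Let $\boldsymbol{\mu}=(\mu_A)_{A\subseteq D}$ with $\mu_A:=\mathbb{E}[e_A(X_A)G(X)]$, and let $\Gamma=(\Gamma_{A,B})_{A,B\subseteq D}$ with $\Gamma_{A,B}:=\mathbb{E}[e_A(X_A)e_B(X_B)]$. Then there exists a unique vector $\boldsymbol\beta=(\beta_A)_{A\subseteq D}\in\mathbb{R}^{2^d}$ such that $$G(X)=\sum_{A\subseteq D}\beta_A\, e_A(X_A)\quad\text{a.s.},$$ this vector satisfies $\Gamma\boldsymbol\beta=\boldsymbol\mu$, and this expansion is the generalized Hoeffding decomposition of $G(X)$, i.e. its components are $G_A(X_A)=\beta_A e_A(X_A)$ for every $A\subseteq D$.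
   Context: For $A\subseteq D$, $X_A:=(X_i)_{i\in A}$ and $\mathbf{P}_A(x_A):=\mathbb{P}(X_A=x_A)$ denotes its probability mass function; $X_\emptyset:=1$. The generalized Hoeffding decomposition (GHD) of a square-integrable $G(X)$ is the (unique, under the full-support hypothesis) representation $G(X)=\sum_{A\subseteq D}G_A(X_A)$, where each $G_A(X_A)$ is a real function of $X_A$ and the family is hierarchically orthogonal: for all $B\subsetneq B'\subseteq D$, $\mathbb{E}[G_B(X_B)G_{B'}(X_{B'})]=0$. *)

theory Defs
  imports "HOL-Probability.Probability"
begin

text \<open>Index set D = {1..d}; the state space {0,1}^d is represented by extensional
  functions x :: nat \<Rightarrow> bool on {1..d} (True encodes 1, False encodes 0).\<close>

definition index_set :: "nat \<Rightarrow> nat set" where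
  "index_set d = {1..d}"

definition cube :: "nat \<Rightarrow> (nat \<Rightarrow> bool) set" where
  "cube d = index_set d \<rightarrow>\<^sub>E (UNIV :: bool set)"

definition marg :: "(nat \<Rightarrow> bool) pmf \<Rightarrow> nat set \<Rightarrow> (nat \<Rightarrow> bool) \<Rightarrow> real" where
  "marg p A x = measure_pmf.prob p {y. \<forall>j\<in>A. y j = x j}"

definition e_fun :: "(nat \<Rightarrow> bool) pmf \<Rightarrow> nat set \<Rightarrow> (nat \<Rightarrow> bool) \<Rightarrow> real" where
  "e_fun p A x = (-1) ^ (\<Sum>j\<in>A. (if x j then 1 else 0 :: nat)) / marg p A x"

definition mu_vec :: "(nat \<Rightarrow> bool) pmf \<Rightarrow> ((nat \<Rightarrow> bool) \<Rightarrow> real) \<Rightarrow> nat set \<Rightarrow> real" where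
  "mu_vec p G A = measure_pmf.expectation p (\<lambda>x. e_fun p A x * G x)"

definition Gamma_mat :: "(nat \<Rightarrow> bool) pmf \<Rightarrow> nat set \<Rightarrow> nat set \<Rightarrow> real" where
  "Gamma_mat p A B = measure_pmf.expectation p (\<lambda>x. e_fun p A x * e_fun p B x)"

text \<open>Generalized Hoeffding decomposition: Gc A is a function of x_A only, the
  components sum to G(X) a.s., and the family is hierarchically orthogonal.
  (Square integrability is automatic: the state space is finite.)\<close>
definition is_GHD :: "nat set \<Rightarrow> (nat \<Rightarrow> bool) pmf \<Rightarrow> ((nat \<Rightarrow> bool) \<Rightarrow> real)
    \<Rightarrow> (nat set \<Rightarrow> (nat \<Rightarrow> bool) \<Rightarrow> real) \<Rightarrow> bool" where
  "is_GHD D p G Gc \<longleftrightarrow>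
     (\<forall>A\<subseteq>D. \<forall>x y. (\<forall>j\<in>A. x j = y j) \<longrightarrow> Gc A x = Gc A y) \<and>
     (AE x in measure_pmf p. G x = (\<Sum>A\<in>Pow D. Gc A x)) \<and>
     (\<forall>B B'. B \<subset> B' \<and> B' \<subseteq> D \<longrightarrow>
        measure_pmf.expectation p (\<lambda>x. Gc B x * Gc B' x) = 0)"

end

theory Submission
  imports Defs "HOL-Library.Function_Algebras"
begin

(* The functions e_A, A \<subseteq> D, form a basis of the real functions on the cube. They are
   linearly independent: if A is maximal among the sets with nonzero coefficient, the functional
   h \<mapsto> \<Sum> (-1)^(\<Sum>_{j \<in> A} z_j) h(z), summed over the face {z : z_i = 0 for i \<notin> A}, is
   positive on e_A and vanishes on every e_B with A \<not>\<subseteq> B, because flipping a coordinate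
   j \<in> A - B reverses the sign and leaves e_B unchanged. There are 2^d of them, as many as points
   of the cube, so they also span. For B \<subset> B' and g a function of X_B, E[e_B' g] is the same
   alternating sum of g over the face of B' (the weight 1/P_B' cancels the law of X_B'), which
   vanishes by flipping a coordinate in B' - B: this is hierarchical orthogonality. The
   equations \<Gamma>\<beta> = \<mu> are linearity of expectation. *)

interpretation real_fun: vector_space "\<lambda>c (f :: 'a \<Rightarrow> real) x. c * f x"
  by unfold_locales (auto simp: fun_eq_iff algebra_simps)

lemma sum_apply: "(\<Sum>i\<in>I. f i) x = (\<Sum>i\<in>I. f i x)"
  by (induction I rule: infinite_finite_induct) auto

lemma span_point_indicators:
  assumes "finite S" and "\<And>x. x \<notin> S \<Longrightarrow> h x = 0"
  shows "h \<in> real_fun.span ((\<lambda>s x. if x = s then 1 else 0 :: real) ` S)"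
proof -
  have "h = (\<Sum>s\<in>S. (\<lambda>x. h s * (if x = s then 1 else 0)))"
    using assms by (auto simp: fun_eq_iff sum_apply if_distrib[of "(*) _"] cong: if_cong)
  also have "\<dots> \<in> real_fun.span ((\<lambda>s x. if x = s then 1 else 0) ` S)"
    by (intro real_fun.span_sum real_fun.span_scale real_fun.span_base) auto
  finally show ?thesis .
qed

lemma eq_if_kernel_trivial:
  fixes f :: "'i \<Rightarrow> 'a \<Rightarrow> real"
  assumes kernel: "\<And>c. \<forall>x\<in>S. (\<Sum>i\<in>I. c i * f i x) = 0 \<Longrightarrow> \<forall>i\<in>I. c i = 0"
    and I: "finite I" "i \<in> I" "j \<in> I" and eq: "\<forall>x\<in>S. f i x = f j x"
  shows "i = j"
proof (rule ccontr)
  assume "i \<noteq> j"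
  define c :: "'i \<Rightarrow> real" where "c k = of_bool (k = i) - of_bool (k = j)" for k
  have "(\<Sum>k\<in>I. c k * f k x) = f i x - f j x" for x
    using I by (simp add: c_def left_diff_distrib sum_subtractf)
  then have "c i = 0"
    using kernel[of c] eq I(2) by simp
  with \<open>i \<noteq> j\<close> show False
    by (simp add: c_def)
qed

lemma linear_system_solvable_if_kernel_trivial:
  fixes f :: "'i \<Rightarrow> 'a \<Rightarrow> real" and g :: "'a \<Rightarrow> real"
  assumes S: "finite S" and I: "finite I" and card: "card S \<le> card I"
    and kernel: "\<And>c. \<forall>x\<in>S. (\<Sum>i\<in>I. c i * f i x) = 0 \<Longrightarrow> \<forall>i\<in>I. c i = 0"
  shows "\<exists>c. \<forall>x\<in>S. g x = (\<Sum>i\<in>I. c i * f i x)"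
proof -
  (* Cut off outside S, all functions lie in the span of the card S point indicators V. *)
  define cut where "cut h = (\<lambda>x. if x \<in> S then h x else 0)" for h :: "'a \<Rightarrow> real"
  have cut_on_S: "cut h x = h x" if "x \<in> S" for h x
    using that by (simp add: cut_def)
  define V where "V = (\<lambda>s x. if x = s then 1 else 0 :: real) ` S"
  define F where "F = (\<lambda>i. cut (f i)) ` I"
  have finite_F: "finite F"
    using I by (simp add: F_def)
  have inj: "inj_on (\<lambda>i. cut (f i)) I"
  proof (rule inj_onI)
    fix i j assume ij: "i \<in> I" "j \<in> I" and eq: "cut (f i) = cut (f j)"
    have "\<forall>x\<in>S. f i x = f j x"
      using eq unfolding cut_def fun_eq_iff by (metis (full_types))
    then show "i = j"
      using eq_if_kernel_trivial[where f = f and S = S and I = I, OF kernel I ij] by blast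
  qed
  have indep: "real_fun.independent F"
  proof (rule real_fun.independent_if_scalars_zero[OF finite_F])
    fix c v assume zero: "(\<Sum>v\<in>F. (\<lambda>x. c v * v x)) = 0" and v: "v \<in> F"
    have "(\<Sum>i\<in>I. c (cut (f i)) * f i x) = 0" if "x \<in> S" for x
      using fun_cong[OF zero, of x] that unfolding F_def sum.reindex[OF inj]
      by (simp add: sum_apply cut_on_S)
    then have "\<forall>i\<in>I. c (cut (f i)) = 0"
      by (intro kernel) blast
    then show "c v = 0"
      using v by (auto simp: F_def)
  qed
  have "cut g \<in> real_fun.span F"
  proof (rule ccontr)
    assume not_in_span: "cut g \<notin> real_fun.span F"
    then have "real_fun.independent (insert (cut g) F)"
      using indep by (rule real_fun.independent_insertI)
    moreover have "insert (cut g) F \<subseteq> real_fun.span V"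
      unfolding V_def F_def using S by (auto intro: span_point_indicators simp: cut_def)
    moreover have "finite V"
      using S by (simp add: V_def)
    ultimately have "card (insert (cut g) F) \<le> card V"
      by (intro conjunct2[OF real_fun.independent_span_bound])
    also have "\<dots> \<le> card I"
      unfolding V_def using le_trans[OF card_image_le[OF S] card] .
    also have "card I = card F"
      using card_image[OF inj] by (simp add: F_def)
    finally have "card (insert (cut g) F) \<le> card F" .
    moreover have "cut g \<notin> F"
      using not_in_span real_fun.span_base by blast
    ultimately show False
      using finite_F by simp
  qed
  then obtain c where c: "cut g = (\<Sum>v\<in>F. (\<lambda>x. c v * v x))"
    using real_fun.span_finite[OF finite_F] by auto
  have "g x = (\<Sum>i\<in>I. c (cut (f i)) * f i x)" if "x \<in> S" for x
    using fun_cong[OF c, of x] that unfolding F_def sum.reindex[OF inj]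
    by (simp add: sum_apply cut_on_S)
  then show ?thesis
    by (intro exI[of _ "\<lambda>i. c (cut (f i))"]) blast
qed

definition depends_only_on :: "nat set \<Rightarrow> ((nat \<Rightarrow> bool) \<Rightarrow> 'b) \<Rightarrow> bool" where
  "depends_only_on A h \<longleftrightarrow> (\<forall>x y. (\<forall>j\<in>A. x j = y j) \<longrightarrow> h x = h y)"

lemma depends_only_onD: "depends_only_on A h \<Longrightarrow> (\<And>j. j \<in> A \<Longrightarrow> x j = y j) \<Longrightarrow> h x = h y"
  unfolding depends_only_on_def by blast

definition walsh :: "nat set \<Rightarrow> (nat \<Rightarrow> bool) \<Rightarrow> real" where
  "walsh A x = (-1) ^ (\<Sum>j\<in>A. (if x j then 1 else 0 :: nat))"

lemma e_fun_eq_walsh_div_marg: "e_fun p A x = walsh A x / marg p A x"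
  by (simp add: e_fun_def walsh_def)

lemma depends_only_on_walsh: "depends_only_on A (walsh A)"
  unfolding depends_only_on_def walsh_def by (auto intro!: arg_cong[of _ _ "power (-1)"] sum.cong)

lemma depends_only_on_marg: "depends_only_on A (marg p A)"
  unfolding depends_only_on_def marg_def by (auto intro!: arg_cong[of _ _ "measure_pmf.prob p"])

lemma depends_only_on_e_fun: "depends_only_on A (e_fun p A)"
  using depends_only_on_walsh depends_only_on_marg
  unfolding depends_only_on_def e_fun_eq_walsh_div_marg by metis

lemma walsh_flip:
  assumes "finite A" "j \<in> A"
  shows "walsh A (x(j := \<not> x j)) = - walsh A x"
proof -
  have "walsh (A - {j}) (x(j := \<not> x j)) = walsh (A - {j}) x"
    using depends_only_on_walsh by (rule depends_only_onD) simp
  then show ?thesis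
    using assms by (simp add: walsh_def sum.remove power_add)
qed

lemma walsh_square: "walsh A x * walsh A x = 1"
  by (simp add: walsh_def flip: power_mult_distrib)

lemma finite_index_set: "finite (index_set d)"
  by (simp add: index_set_def)

lemma mem_cube_iff: "x \<in> cube d \<longleftrightarrow> (\<forall>i. i \<notin> index_set d \<longrightarrow> x i = undefined)"
  by (auto simp: cube_def PiE_iff extensional_def)

lemma finite_cube: "finite (cube d)"
  by (simp add: cube_def finite_PiE finite_index_set)

lemma card_cube: "card (cube d) = card (Pow (index_set d))"
  by (simp add: cube_def card_PiE finite_index_set card_Pow)

definition face :: "nat \<Rightarrow> nat set \<Rightarrow> (nat \<Rightarrow> bool) set" where
  "face d A = {z \<in> cube d. \<forall>i \<in> index_set d - A. \<not> z i}"

definition face_proj :: "nat \<Rightarrow> nat set \<Rightarrow> (nat \<Rightarrow> bool) \<Rightarrow> nat \<Rightarrow> bool" where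
  "face_proj d A x = (\<lambda>i. if i \<in> index_set d then i \<in> A \<and> x i else undefined)"

lemma finite_face: "finite (face d A)"
  using finite_cube by (simp add: face_def)

lemma face_proj_in_face: "face_proj d A x \<in> face d A"
  by (simp add: face_def face_proj_def mem_cube_iff)

lemma face_proj_agrees: "A \<subseteq> index_set d \<Longrightarrow> j \<in> A \<Longrightarrow> face_proj d A x j = x j"
  by (auto simp: face_proj_def)

lemma face_proj_eq_iff:
  assumes "A \<subseteq> index_set d" "z \<in> face d A"
  shows "face_proj d A y = z \<longleftrightarrow> (\<forall>j\<in>A. y j = z j)"
  using assms by (auto simp: face_def face_proj_def mem_cube_iff fun_eq_iff)

lemma face_proj_image:
  assumes "A \<subseteq> index_set d"
  shows "face_proj d A ` cube d = face d A"
proof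
  show "face_proj d A ` cube d \<subseteq> face d A"
    using face_proj_in_face by blast
  show "face d A \<subseteq> face_proj d A ` cube d"
  proof
    fix z assume z: "z \<in> face d A"
    then have "face_proj d A z = z"
      using face_proj_eq_iff[OF assms z] by blast
    moreover have "z \<in> cube d"
      using z by (simp add: face_def)
    ultimately show "z \<in> face_proj d A ` cube d"
      by (metis image_eqI)
  qed
qed

lemma pmf_map_face_proj:
  assumes "A \<subseteq> index_set d" "z \<in> face d A"
  shows "pmf (map_pmf (face_proj d A) p) z = marg p A z"
  using assms by (simp add: pmf_map marg_def vimage_def face_proj_eq_iff)

lemma flip_in_face:
  assumes "A \<subseteq> index_set d" "j \<in> A" "z \<in> face d A"
  shows "z(j := b) \<in> face d A"
  using assms by (auto simp: face_def mem_cube_iff)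

lemma sum_face_walsh_eq_0:
  assumes A: "A \<subseteq> index_set d" and j: "j \<in> A" "j \<notin> C" and h: "depends_only_on C h"
  shows "(\<Sum>z\<in>face d A. walsh A z * h z) = 0"
proof -
  let ?flip = "\<lambda>z. z(j := \<not> z j)"
  have h_flip: "h (?flip z) = h z" for z
    using h by (rule depends_only_onD) (use j in auto)
  have "(\<Sum>z\<in>face d A. walsh A z * h z) = (\<Sum>z\<in>face d A. walsh A (?flip z) * h (?flip z))"
    by (rule sum.reindex_bij_witness[of _ ?flip ?flip]) (auto simp: A j flip_in_face)
  also have "\<dots> = - (\<Sum>z\<in>face d A. walsh A z * h z)"
    using A j finite_subset[OF A finite_index_set]
    by (simp add: walsh_flip h_flip sum_negf)
  finally show ?thesis by simp
qed

lemma Gamma_mat_mult_eq_mu_vec: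
  assumes p: "finite (set_pmf p)" and I: "finite I"
    and G: "AE x in measure_pmf p. G x = (\<Sum>B\<in>I. \<beta> B * e_fun p B x)"
  shows "(\<Sum>B\<in>I. Gamma_mat p A B * \<beta> B) = mu_vec p G A"
proof -
  have "mu_vec p G A = measure_pmf.expectation p (\<lambda>x. \<Sum>B\<in>I. \<beta> B * (e_fun p A x * e_fun p B x))"
    unfolding mu_vec_def using G
    by (intro integral_cong_AE) (auto simp: sum_distrib_left mult_ac elim!: eventually_mono)
  also have "\<dots> = (\<Sum>B\<in>I. Gamma_mat p A B * \<beta> B)"
    by (simp add: Gamma_mat_def integrable_measure_pmf_finite[OF p] mult.commute)
  finally show ?thesis ..
qed

context
  fixes d :: nat and p :: "(nat \<Rightarrow> bool) pmf"
  assumes full_support: "set_pmf p = cube d"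
begin

lemma AE_iff_on_cube: "(AE x in measure_pmf p. Q x) \<longleftrightarrow> (\<forall>x\<in>cube d. Q x)"
  by (simp add: AE_measure_pmf_iff full_support)

lemma marg_pos:
  assumes "A \<subseteq> index_set d" "z \<in> face d A"
  shows "marg p A z > 0"
  using assms pmf_positive[of z "map_pmf (face_proj d A) p"]
  by (simp add: pmf_map_face_proj full_support face_proj_image)

lemma expectation_div_marg:
  assumes A: "A \<subseteq> index_set d" and h: "depends_only_on A h"
  shows "measure_pmf.expectation p (\<lambda>x. h x / marg p A x) = (\<Sum>z\<in>face d A. h z)"
proof -
  let ?q = "map_pmf (face_proj d A) p"
  have "h x / marg p A x = h (face_proj d A x) / marg p A (face_proj d A x)" for x
    using depends_only_onD[OF h] depends_only_onD[OF depends_only_on_marg]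
    by (metis A face_proj_agrees)
  then have "measure_pmf.expectation p (\<lambda>x. h x / marg p A x)
      = measure_pmf.expectation ?q (\<lambda>z. h z / marg p A z)"
    by simp
  also have "\<dots> = (\<Sum>z\<in>face d A. h z / marg p A z * pmf ?q z)"
    by (rule integral_measure_pmf_real) (auto simp: finite_face full_support face_proj_image A)
  also have "\<dots> = (\<Sum>z\<in>face d A. h z)"
  proof (intro sum.cong refl)
    fix z assume "z \<in> face d A"
    then show "h z / marg p A z * pmf ?q z = h z"
      using marg_pos[OF A, of z] by (simp add: pmf_map_face_proj A)
  qed
  finally show ?thesis .
qed

lemma expectation_e_fun_mult_eq_0:
  assumes BB': "B \<subset> B'" "B' \<subseteq> index_set d" and g: "depends_only_on B g"
  shows "measure_pmf.expectation p (\<lambda>x. e_fun p B' x * g x) = 0"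
proof -
  obtain j where j: "j \<in> B'" "j \<notin> B"
    using BB'(1) by blast
  have "depends_only_on B' (\<lambda>x. walsh B' x * g x)"
    using depends_only_onD[OF depends_only_on_walsh] depends_only_onD[OF g] BB'(1)
    unfolding depends_only_on_def by (metis psubsetD)
  then have "measure_pmf.expectation p (\<lambda>x. walsh B' x * g x / marg p B' x)
      = (\<Sum>z\<in>face d B'. walsh B' z * g z)"
    using BB'(2) by (rule expectation_div_marg[rotated])
  also have "\<dots> = 0"
    using BB'(2) j g by (rule sum_face_walsh_eq_0)
  finally show ?thesis
    by (simp add: e_fun_eq_walsh_div_marg)
qed

lemma e_fun_independent:
  assumes zero: "\<forall>x\<in>cube d. (\<Sum>B\<in>Pow (index_set d). \<gamma> B * e_fun p B x) = 0"
  shows "\<forall>A\<in>Pow (index_set d). \<gamma> A = 0"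
proof (rule ccontr)
  let ?D = "index_set d"
  let ?N = "{B \<in> Pow ?D. \<gamma> B \<noteq> 0}"
  assume "\<not> ?thesis"
  then have "?N \<noteq> {}"
    by blast
  then obtain A where "A \<in> ?N" and maximal: "\<forall>B\<in>?N. A \<subseteq> B \<longrightarrow> A = B"
    using finite_has_maximal[of ?N] finite_index_set by auto
  then have A: "A \<subseteq> ?D" "\<gamma> A \<noteq> 0"
    by auto
  define \<phi> where "\<phi> h = (\<Sum>z\<in>face d A. walsh A z * h z)" for h :: "(nat \<Rightarrow> bool) \<Rightarrow> real"
  have \<phi>_other: "\<gamma> B * \<phi> (e_fun p B) = 0" if "B \<subseteq> ?D" "B \<noteq> A" for B
  proof (cases "\<gamma> B = 0")
    case False
    then have "B \<in> ?N"
      using that(1) by simp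
    then have "\<not> A \<subseteq> B"
      using maximal that(2) by blast
    then obtain j where "j \<in> A" "j \<notin> B"
      by blast
    then show ?thesis
      unfolding \<phi>_def using A(1) depends_only_on_e_fun by (simp add: sum_face_walsh_eq_0)
  qed simp
  have "\<phi> (e_fun p A) = (\<Sum>z\<in>face d A. 1 / marg p A z)"
    by (simp add: \<phi>_def e_fun_eq_walsh_div_marg times_divide_eq_right[symmetric] walsh_square)
  also have "\<dots> > 0"
    using face_proj_in_face[of d A undefined] finite_face marg_pos[OF A(1)] by (intro sum_pos) auto
  finally have \<phi>_self: "\<phi> (e_fun p A) > 0" .
  have "0 = \<phi> (\<lambda>x. \<Sum>B\<in>Pow ?D. \<gamma> B * e_fun p B x)"
    using zero by (simp add: \<phi>_def face_def)
  also have "\<dots> = (\<Sum>B\<in>Pow ?D. \<gamma> B * \<phi> (e_fun p B))"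
    unfolding \<phi>_def by (simp add: sum_distrib_left mult.left_commute sum.swap[of _ "face d A"])
  also have "\<dots> = \<gamma> A * \<phi> (e_fun p A)"
  proof -
    have "(\<Sum>B\<in>Pow ?D - {A}. \<gamma> B * \<phi> (e_fun p B)) = 0"
      using \<phi>_other by (intro sum.neutral) auto
    then show ?thesis
      using A(1) finite_index_set by (simp add: sum.remove)
  qed
  finally show False
    using A(2) \<phi>_self by simp
qed

lemma e_fun_expansion_exists:
  "\<exists>\<beta>. \<beta> \<in> Pow (index_set d) \<rightarrow>\<^sub>E (UNIV :: real set) \<and>
     (AE x in measure_pmf p. G x = (\<Sum>A\<in>Pow (index_set d). \<beta> A * e_fun p A x))"
proof -
  have "finite (Pow (index_set d))" "card (cube d) \<le> card (Pow (index_set d))"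
    by (simp_all add: finite_index_set card_cube)
  then obtain c where "\<forall>x\<in>cube d. G x = (\<Sum>A\<in>Pow (index_set d). c A * e_fun p A x)"
    using linear_system_solvable_if_kernel_trivial[OF finite_cube[of d] _ _ e_fun_independent] by blast
  then show ?thesis
    by (intro exI[of _ "restrict c (Pow (index_set d))"]) (simp add: AE_iff_on_cube)
qed

lemma e_fun_expansion_unique:
  assumes "\<beta> \<in> Pow (index_set d) \<rightarrow>\<^sub>E (UNIV :: real set)" "\<gamma> \<in> Pow (index_set d) \<rightarrow>\<^sub>E UNIV"
    and "AE x in measure_pmf p. G x = (\<Sum>A\<in>Pow (index_set d). \<beta> A * e_fun p A x)"
    and "AE x in measure_pmf p. G x = (\<Sum>A\<in>Pow (index_set d). \<gamma> A * e_fun p A x)"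
  shows "\<beta> = \<gamma>"
proof -
  have "\<forall>x\<in>cube d. (\<Sum>A\<in>Pow (index_set d). (\<beta> A - \<gamma> A) * e_fun p A x) = 0"
    using assms(3,4) by (simp add: AE_iff_on_cube left_diff_distrib sum_subtractf)
  then have "\<forall>A\<in>Pow (index_set d). \<beta> A - \<gamma> A = 0"
    by (rule e_fun_independent)
  then show ?thesis
    using assms(1,2) by (intro PiE_ext) auto
qed

lemma is_GHD_e_fun_expansion:
  assumes "AE x in measure_pmf p. G x = (\<Sum>A\<in>Pow (index_set d). \<beta> A * e_fun p A x)"
  shows "is_GHD (index_set d) p G (\<lambda>A x. \<beta> A * e_fun p A x)"
  unfolding is_GHD_def
proof (intro conjI allI impI)
  fix A and x y :: "nat \<Rightarrow> bool"
  assume "A \<subseteq> index_set d" "\<forall>j\<in>A. x j = y j"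
  then have "e_fun p A x = e_fun p A y"
    by (intro depends_only_onD[OF depends_only_on_e_fun]) blast
  then show "\<beta> A * e_fun p A x = \<beta> A * e_fun p A y"
    by simp
next
  fix B B' assume "B \<subset> B' \<and> B' \<subseteq> index_set d"
  then have "measure_pmf.expectation p (\<lambda>x. e_fun p B' x * e_fun p B x) = 0"
    using expectation_e_fun_mult_eq_0[OF _ _ depends_only_on_e_fun] by simp
  moreover have "(\<lambda>x. \<beta> B * e_fun p B x * (\<beta> B' * e_fun p B' x))
      = (\<lambda>x. \<beta> B * \<beta> B' * (e_fun p B' x * e_fun p B x))"
    by (simp add: fun_eq_iff)
  ultimately show "measure_pmf.expectation p (\<lambda>x. \<beta> B * e_fun p B x * (\<beta> B' * e_fun p B' x)) = 0"
    by simp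
qed (rule assms)

end

theorem theorem2:
  fixes d :: nat and p :: "(nat \<Rightarrow> bool) pmf" and G :: "(nat \<Rightarrow> bool) \<Rightarrow> real"
  assumes support: "set_pmf p = cube d"
  shows "(\<exists>!\<beta>. \<beta> \<in> Pow (index_set d) \<rightarrow>\<^sub>E (UNIV :: real set) \<and>
            (AE x in measure_pmf p. G x = (\<Sum>A\<in>Pow (index_set d). \<beta> A * e_fun p A x)))
       \<and> (\<forall>\<beta>. \<beta> \<in> Pow (index_set d) \<rightarrow>\<^sub>E (UNIV :: real set) \<and>
            (AE x in measure_pmf p. G x = (\<Sum>A\<in>Pow (index_set d). \<beta> A * e_fun p A x))
            \<longrightarrow> (\<forall>A\<in>Pow (index_set d).
                   (\<Sum>B\<in>Pow (index_set d). Gamma_mat p A B * \<beta> B) = mu_vec p G A)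
              \<and> is_GHD (index_set d) p G (\<lambda>A x. \<beta> A * e_fun p A x))"
proof (intro conjI allI impI ballI)
  show "\<exists>!\<beta>. \<beta> \<in> Pow (index_set d) \<rightarrow>\<^sub>E (UNIV :: real set) \<and>
          (AE x in measure_pmf p. G x = (\<Sum>A\<in>Pow (index_set d). \<beta> A * e_fun p A x))"
    using e_fun_expansion_exists[OF support]
    by (rule ex_ex1I) (use e_fun_expansion_unique[OF support] in blast)
next
  fix \<beta> A
  assume "\<beta> \<in> Pow (index_set d) \<rightarrow>\<^sub>E (UNIV :: real set) \<and>
    (AE x in measure_pmf p. G x = (\<Sum>A\<in>Pow (index_set d). \<beta> A * e_fun p A x))"
  then have expansion: "AE x in measure_pmf p. G x = (\<Sum>A\<in>Pow (index_set d). \<beta> A * e_fun p A x)" ..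
  show "(\<Sum>B\<in>Pow (index_set d). Gamma_mat p A B * \<beta> B) = mu_vec p G A"
    using expansion by (intro Gamma_mat_mult_eq_mu_vec) (simp_all add: support finite_cube finite_index_set)
  show "is_GHD (index_set d) p G (\<lambda>A x. \<beta> A * e_fun p A x)"
    using support expansion by (rule is_GHD_e_fun_expansion)
qed

end
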